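(* Let $M=\langle \mathcal S,\mathcal A,T,U,s_0,h,\dots\rangle$ be a fixed-horizon constrained or chance-constrained MDP instance (as described in the context) with horizon $h\ge 1$ and $U_{\max}:=\max_{s\in\mathcal S,a\in\mathcal A}U(s,a)>0$, let $\epsilon>0$, and for $k=0,\dots,h-1$ let $$L_k:=\frac{\epsilon\, U_{\max}}{(h-k)(\ln h+1)}.$$ Let $\pi^*$ be an optimal deterministic policy of $M$. Then for every $k\in\{0,\dots,h-1\}$ and every state $s_k\in\mathcal S_k$, $$\overline v_{\pi^*}(s_k)\ \ge\ v_{\pi^*}(s_k)-\sum_{k'=k}^{h-1}L_{k'}.$$
   Context: An MDP instance has finite state set $\mathcal S$, finite action set $\mathcal A$, transition function $T:\mathcal S\times\mathcal A\times\mathcal S\to[0,1]$ with $T(s,a,s')=\Pr(s'\mid s,a)$, non-negative utility $U:\mathcal S\times\mathcal A\to\mathbb R_+$, initial state $s_0$ and horizon $h$. $\mathcal S_0=\{s_0\}$ and $\mathcal S_{k+1}$ is the set of states reachable with positive probability at time $k+1$ from some state of $\mathcal S_k$ under some action. A deterministic policy is a map $\pi:\mathcal S\times\{0,\dots,h-1\}\to\mathcal A$; write $\pi(s_k)$ for the action at state $s_k$ at time $k$. Its value function is $v_\pi(s_h)=0$ and $v_\pi(s_k)=\sum_{s_{k+1}\in\mathcal S_{k+1}}T(s_k,\pi(s_k),s_{k+1})v_\pi(s_{k+1})+U(s_k,\pi(s_k))$ for $k=h-1,\dots,0$. The discretized value is defined by $\overline v_\pi(s_h)=0$ and, for $k=h-1,\dots,0$,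 $$\overline v_\pi(s_k)=\Big\lfloor \tfrac{1}{L_k}\Big(\sum_{s_{k+1}\in\mathcal S_{k+1}}T(s_k,\pi(s_k),s_{k+1})\,\overline v_\pi(s_{k+1})+U(s_k,\pi(s_k))\Big)\Big\rfloor L_k.$$ An optimal deterministic policy is one maximizing $v_\pi(s_0)$ among deterministic policies satisfying the problem's constraint (either an expected-cost constraint $\mathbb E[\sum_{k=0}^{h-1}C(S_k,\pi(S_k))]\le P$ with non-negative cost $C$ and $P>0$, or a chance constraint bounding the failure probability by $\Delta$). *)

theory Defs
  imports Complex_Main
begin

text \<open>Finite MDP: states of finite type 's, actions of finite type 'a.
  T s a s' = Pr(s' | s, a); U s a = utility; deterministic policies are maps
  's \<Rightarrow> nat \<Rightarrow> 'a (state, time).\<close>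

definition is_transition :: "('s::finite \<Rightarrow> 'a::finite \<Rightarrow> 's \<Rightarrow> real) \<Rightarrow> bool" where
  "is_transition T \<longleftrightarrow> (\<forall>s a s'. 0 \<le> T s a s') \<and> (\<forall>s a. (\<Sum>s'\<in>UNIV. T s a s') = 1)"

primrec reach :: "('s \<Rightarrow> 'a \<Rightarrow> 's \<Rightarrow> real) \<Rightarrow> 's \<Rightarrow> nat \<Rightarrow> 's set" where
  "reach T s0 0 = {s0}"
| "reach T s0 (Suc k) = {s'. \<exists>s\<in>reach T s0 k. \<exists>a. T s a s' > 0}"

text \<open>Value with n remaining steps, starting at time k:
  vrem n k s corresponds to v_pi(s_k) when n = h - k.\<close>
primrec vrem :: "('s \<Rightarrow> 'a \<Rightarrow> 's \<Rightarrow> real) \<Rightarrow> ('s \<Rightarrow> 'a \<Rightarrow> real) \<Rightarrow> 's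
                 \<Rightarrow> ('s \<Rightarrow> nat \<Rightarrow> 'a) \<Rightarrow> nat \<Rightarrow> nat \<Rightarrow> 's \<Rightarrow> real" where
  "vrem T U s0 \<pi> 0 k s = 0"
| "vrem T U s0 \<pi> (Suc n) k s =
     (\<Sum>s'\<in>reach T s0 (Suc k). T s (\<pi> s k) s' * vrem T U s0 \<pi> n (Suc k) s') + U s (\<pi> s k)"

definition value_fun :: "('s \<Rightarrow> 'a \<Rightarrow> 's \<Rightarrow> real) \<Rightarrow> ('s \<Rightarrow> 'a \<Rightarrow> real) \<Rightarrow> 's \<Rightarrow> nat
                 \<Rightarrow> ('s \<Rightarrow> nat \<Rightarrow> 'a) \<Rightarrow> nat \<Rightarrow> 's \<Rightarrow> real" where
  "value_fun T U s0 h \<pi> k s = vrem T U s0 \<pi> (h - k) k s"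

primrec dvrem :: "('s \<Rightarrow> 'a \<Rightarrow> 's \<Rightarrow> real) \<Rightarrow> ('s \<Rightarrow> 'a \<Rightarrow> real) \<Rightarrow> 's \<Rightarrow> (nat \<Rightarrow> real)
                 \<Rightarrow> ('s \<Rightarrow> nat \<Rightarrow> 'a) \<Rightarrow> nat \<Rightarrow> nat \<Rightarrow> 's \<Rightarrow> real" where
  "dvrem T U s0 L \<pi> 0 k s = 0"
| "dvrem T U s0 L \<pi> (Suc n) k s =
     of_int \<lfloor>((\<Sum>s'\<in>reach T s0 (Suc k). T s (\<pi> s k) s' * dvrem T U s0 L \<pi> n (Suc k) s')
                + U s (\<pi> s k)) / L k\<rfloor> * L k"

definition disc_value_fun :: "('s \<Rightarrow> 'a \<Rightarrow> 's \<Rightarrow> real) \<Rightarrow> ('s \<Rightarrow> 'a \<Rightarrow> real) \<Rightarrow> 's \<Rightarrow> nat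
                 \<Rightarrow> (nat \<Rightarrow> real) \<Rightarrow> ('s \<Rightarrow> nat \<Rightarrow> 'a) \<Rightarrow> nat \<Rightarrow> 's \<Rightarrow> real" where
  "disc_value_fun T U s0 h L \<pi> k s = dvrem T U s0 L \<pi> (h - k) k s"

text \<open>Expected-cost constraint: E[sum_{k<h} C(S_k, pi(S_k))] \<le> P. The expected
  accumulated cost is the value function with utility replaced by C.\<close>
definition cost_feasible :: "('s \<Rightarrow> 'a \<Rightarrow> 's \<Rightarrow> real) \<Rightarrow> ('s \<Rightarrow> 'a \<Rightarrow> real) \<Rightarrow> real \<Rightarrow> 's \<Rightarrow> nat
                 \<Rightarrow> ('s \<Rightarrow> nat \<Rightarrow> 'a) \<Rightarrow> bool" where
  "cost_feasible T C P s0 h \<pi> \<longleftrightarrow> value_fun T C s0 h \<pi> 0 s0 \<le> P"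

text \<open>Chance constraint: probability of visiting a failure state (set F) at some
  time 0..h, with n remaining steps from time k in state s.\<close>
primrec failrem :: "('s \<Rightarrow> 'a \<Rightarrow> 's \<Rightarrow> real) \<Rightarrow> 's set \<Rightarrow> 's
                 \<Rightarrow> ('s \<Rightarrow> nat \<Rightarrow> 'a) \<Rightarrow> nat \<Rightarrow> nat \<Rightarrow> 's \<Rightarrow> real" where
  "failrem T F s0 \<pi> 0 k s = (if s \<in> F then 1 else 0)"
| "failrem T F s0 \<pi> (Suc n) k s = (if s \<in> F then 1 else
     (\<Sum>s'\<in>reach T s0 (Suc k). T s (\<pi> s k) s' * failrem T F s0 \<pi> n (Suc k) s'))"

definition chance_feasible :: "('s \<Rightarrow> 'a \<Rightarrow> 's \<Rightarrow> real) \<Rightarrow> 's set \<Rightarrow> real \<Rightarrow> 's \<Rightarrow> nat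
                 \<Rightarrow> ('s \<Rightarrow> nat \<Rightarrow> 'a) \<Rightarrow> bool" where
  "chance_feasible T F \<Delta> s0 h \<pi> \<longleftrightarrow> failrem T F s0 \<pi> h 0 s0 \<le> \<Delta>"

definition optimal_policy :: "('s \<Rightarrow> 'a \<Rightarrow> 's \<Rightarrow> real) \<Rightarrow> ('s \<Rightarrow> 'a \<Rightarrow> real) \<Rightarrow> 's \<Rightarrow> nat
                 \<Rightarrow> (('s \<Rightarrow> nat \<Rightarrow> 'a) \<Rightarrow> bool) \<Rightarrow> ('s \<Rightarrow> nat \<Rightarrow> 'a) \<Rightarrow> bool" where
  "optimal_policy T U s0 h feas \<pi> \<longleftrightarrow> feas \<pi> \<and>
     (\<forall>\<pi>'. feas \<pi>' \<longrightarrow> value_fun T U s0 h \<pi>' 0 s0 \<le> value_fun T U s0 h \<pi> 0 s0)"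

end

theory Submission
  imports Defs
begin

text \<open>Rounding down to the grid of width \<open>L\<^sub>k\<close> loses less than \<open>L\<^sub>k\<close> at time \<open>k\<close>, and the
  losses of later steps reach time \<open>k\<close> averaged with transition weights of total mass at
  most one; by induction on the number of remaining steps, the total loss is at most
  \<open>\<Sum>k'=k..<h. L\<^sub>k'\<close>. Only positivity of the grid widths matters, so the bound holds for every
  policy, not just an optimal one.\<close>

lemma floor_divide_mult_ge:
  fixes x L :: real
  assumes "0 < L"
  shows "x - L \<le> of_int \<lfloor>x / L\<rfloor> * L"
proof -
  have "x / L - 1 \<le> of_int \<lfloor>x / L\<rfloor>" by linarith
  then have "(x / L - 1) * L \<le> of_int \<lfloor>x / L\<rfloor> * L"
    using assms by (simp add: mult_right_mono)
  with assms show ?thesis by (simp add: algebra_simps)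
qed

lemma weighted_sum_diff_ge:
  fixes w f g :: "'i \<Rightarrow> real"
  assumes "\<And>i. i \<in> A \<Longrightarrow> 0 \<le> w i" and "sum w A \<le> 1" and "0 \<le> c"
    and "\<And>i. i \<in> A \<Longrightarrow> g i - c \<le> f i"
  shows "(\<Sum>i\<in>A. w i * g i) - c \<le> (\<Sum>i\<in>A. w i * f i)"
proof -
  have "(\<Sum>i\<in>A. w i * g i) - c \<le> (\<Sum>i\<in>A. w i * g i) - c * sum w A"
    using assms(2,3) by (simp add: mult_left_le)
  also have "\<dots> = (\<Sum>i\<in>A. w i * (g i - c))"
    by (simp add: algebra_simps sum_subtractf sum_distrib_left)
  also have "\<dots> \<le> (\<Sum>i\<in>A. w i * f i)"
    using assms(1,4) by (intro sum_mono mult_left_mono) auto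
  finally show ?thesis .
qed

lemma transition_nonneg: "is_transition T \<Longrightarrow> 0 \<le> T s a s'"
  by (simp add: is_transition_def)

lemma transition_sum_le_1:
  assumes "is_transition T"
  shows "(\<Sum>s'\<in>A. T s a s') \<le> 1"
proof -
  have "(\<Sum>s'\<in>A. T s a s') \<le> (\<Sum>s'\<in>UNIV. T s a s')"
    using transition_nonneg[OF assms] by (intro sum_mono2) auto
  with assms show ?thesis by (simp add: is_transition_def)
qed

lemma dvrem_ge_vrem_minus_widths:
  fixes T :: "'s::finite \<Rightarrow> 'a::finite \<Rightarrow> 's \<Rightarrow> real"
  assumes "is_transition T" and "\<And>k'. k' \<in> {k..<k + n} \<Longrightarrow> 0 < L k'"
  shows "vrem T U s0 \<pi> n k s - (\<Sum>k'=k..<k + n. L k') \<le> dvrem T U s0 L \<pi> n k s"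
  using assms(2)
proof (induction n arbitrary: k s)
  case 0
  then show ?case by simp
next
  case (Suc n)
  define later where "later = (\<Sum>k'=Suc k..<Suc k + n. L k')"
  let ?w = "T s (\<pi> s k)"
  let ?R = "reach T s0 (Suc k)"
  have "0 \<le> later"
    unfolding later_def using Suc.prems by (intro sum_nonneg) (auto intro: less_imp_le)
  moreover have "vrem T U s0 \<pi> n (Suc k) s' - later \<le> dvrem T U s0 L \<pi> n (Suc k) s'" for s'
    unfolding later_def using Suc.prems by (intro Suc.IH) auto
  ultimately have expected:
    "(\<Sum>s'\<in>?R. ?w s' * vrem T U s0 \<pi> n (Suc k) s') - later
       \<le> (\<Sum>s'\<in>?R. ?w s' * dvrem T U s0 L \<pi> n (Suc k) s')"
    by (intro weighted_sum_diff_ge transition_nonneg[OF assms(1)] transition_sum_le_1[OF assms(1)])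
  have "0 < L k" using Suc.prems by simp
  from floor_divide_mult_ge[OF this]
  have rounding:
    "(\<Sum>s'\<in>?R. ?w s' * dvrem T U s0 L \<pi> n (Suc k) s') + U s (\<pi> s k) - L k
       \<le> dvrem T U s0 L \<pi> (Suc n) k s"
    by simp
  have "(\<Sum>k'=k..<k + Suc n. L k') = L k + later"
    unfolding later_def by (simp add: sum.atLeast_Suc_lessThan)
  with expected rounding show ?case unfolding vrem.simps by linarith
qed

theorem lemma3:
  fixes T :: "'s::finite \<Rightarrow> 'a::finite \<Rightarrow> 's \<Rightarrow> real"
    and U C :: "'s \<Rightarrow> 'a \<Rightarrow> real" and s0 :: 's and h :: nat
    and P \<Delta> \<epsilon> :: real and F :: "'s set" and \<pi>s :: "'s \<Rightarrow> nat \<Rightarrow> 'a"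
  assumes "is_transition T"
    and "\<forall>s a. 0 \<le> U s a"
    and "h \<ge> 1"
    and "Max (range (\<lambda>(s, a). U s a)) > 0"
    and "\<epsilon> > 0"
    and "((\<forall>s a. 0 \<le> C s a) \<and> P > 0 \<and> optimal_policy T U s0 h (cost_feasible T C P s0 h) \<pi>s)
       \<or> optimal_policy T U s0 h (chance_feasible T F \<Delta> s0 h) \<pi>s"
  shows "\<forall>k < h. \<forall>s \<in> reach T s0 k.
     (let Umax = Max (range (\<lambda>(s, a). U s a));
          L = (\<lambda>k'. \<epsilon> * Umax / (real (h - k') * (ln (real h) + 1)))
      in disc_value_fun T U s0 h L \<pi>s k s \<ge> value_fun T U s0 h \<pi>s k s - (\<Sum>k'=k..<h. L k'))"
proof (intro allI impI ballI)
  fix k s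
  assume "k < h"
  define Umax where "Umax = Max (range (\<lambda>(s, a). U s a))"
  define L where "L = (\<lambda>k'. \<epsilon> * Umax / (real (h - k') * (ln (real h) + 1)))"
  have "0 < ln (real h) + 1"
    using assms(3) by (simp add: add_nonneg_pos)
  then have "0 < L k'" if "k' < h" for k'
    using that assms(4,5) by (simp add: L_def Umax_def)
  with \<open>k < h\<close> have "value_fun T U s0 h \<pi>s k s - (\<Sum>k'=k..<h. L k') \<le> disc_value_fun T U s0 h L \<pi>s k s"
    using dvrem_ge_vrem_minus_widths[OF assms(1), of k "h - k" L U s0 \<pi>s s]
    by (simp add: value_fun_def disc_value_fun_def)
  then show "let Umax = Max (range (\<lambda>(s, a). U s a));
          L = (\<lambda>k'. \<epsilon> * Umax / (real (h - k') * (ln (real h) + 1)))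
      in disc_value_fun T U s0 h L \<pi>s k s \<ge> value_fun T U s0 h \<pi>s k s - (\<Sum>k'=k..<h. L k')"
    by (simp add: Let_def Umax_def L_def)
qed

end
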